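(* Let $G$ be a connected graph with vertex set $\{u_1,\dots,u_n\}$, $n\ge2$, and let $\mathcal{H}=\{H_1,\dots,H_n\}$ be a family of graphs. Then $\dim_l(G\circ\mathcal{H})=\sum_{i=1}^n\operatorname{adim}_l(H_i)$ if and only if (a) for every two adjacent vertices $u_i,u_j\in I$ not belonging to the same true twin equivalence class of $G$ there exists $u\in V(G)-(V_E\cup\{u_i,u_j\})$ with $d_G(u,u_i)\ne d_G(u,u_j)$, and (b) each true twin equivalence class of $G$ contains at most one vertex $u_i$ with $H_i\in\mathcal{G}$.
   Context: All graphs are finite and simple with at least one vertex. $d_G$ is shortest-path distance ($+\infty$ between components), $d_{G,2}=\min\{d_G,2\}$; $s$ distinguishes $x,y$ w.r.t. $d$ if $d(s,x)\ne d(s,y)$. $\dim_l(G)$: minimum size of $S\subseteq V(G)$ such that any two adjacent vertices are distinguished w.r.t. $d_G$ by some vertex of $S$. $\operatorname{adim}_l(H)$: minimum size of $S\subseteq V(H)$ such that any two adjacent vertices are distinguished w.r.t. $d_{H,2}$ by some vertex of $S$; minimum such sets are local adjacency bases. $\Phi$: class of edgeless graphs. $\mathcal{G}$: class of graphs $H$ such that every local adjacency basis $B$ of $H$ satisfies $B\subseteq N_H(v)$ for some $v\in V(H)$. True twins: $N[x]=N[y]$; $T(G)$ is the union of the non-singleton true twin equivalence classes of $G$. $V_E=\{u_i\in V(G)-T(G): H_i\in\Phi\}$, $I=\{u_i\in V(G): H_i\in\mathcal{G}\}$. Lexicographic product $G\circ\mathcal{H}$: vertex set $\bigcup_i\{u_i\}\times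 V(H_i)$, $(u_i,v)\sim(u_j,w)$ iff $u_iu_j\in E(G)$, or $i=j$ and $vw\in E(H_i)$. *)

theory Defs
  imports Main "HOL-Library.Extended_Nat"
begin

definition graph :: "'a set \<Rightarrow> ('a \<Rightarrow> 'a \<Rightarrow> bool) \<Rightarrow> bool" where
  "graph V E \<longleftrightarrow> finite V \<and> V \<noteq> {} \<and>
     (\<forall>x y. E x y \<longrightarrow> x \<in> V \<and> y \<in> V) \<and>
     (\<forall>x y. E x y \<longrightarrow> E y x) \<and> (\<forall>x. \<not> E x x)"

definition walk :: "'a set \<Rightarrow> ('a \<Rightarrow> 'a \<Rightarrow> bool) \<Rightarrow> nat \<Rightarrow> 'a \<Rightarrow> 'a \<Rightarrow> bool" where
  "walk V E n x y \<longleftrightarrow> (\<exists>p::nat \<Rightarrow> 'a. p 0 = x \<and> p n = y \<and> (\<forall>i\<le>n. p i \<in> V) \<and>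
      (\<forall>i<n. E (p i) (p (Suc i))))"

text \<open>Shortest-path distance d_G, equal to infinity between components.\<close>
definition gdist :: "'a set \<Rightarrow> ('a \<Rightarrow> 'a \<Rightarrow> bool) \<Rightarrow> 'a \<Rightarrow> 'a \<Rightarrow> enat" where
  "gdist V E x y = (INF n \<in> {n. walk V E n x y}. enat n)"

definition connected_graph :: "'a set \<Rightarrow> ('a \<Rightarrow> 'a \<Rightarrow> bool) \<Rightarrow> bool" where
  "connected_graph V E \<longleftrightarrow> graph V E \<and> (\<forall>x\<in>V. \<forall>y\<in>V. gdist V E x y \<noteq> \<infinity>)"

definition gdist2 :: "'a set \<Rightarrow> ('a \<Rightarrow> 'a \<Rightarrow> bool) \<Rightarrow> 'a \<Rightarrow> 'a \<Rightarrow> enat" where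
  "gdist2 V E x y = min (gdist V E x y) 2"

definition local_resolving :: "'a set \<Rightarrow> ('a \<Rightarrow> 'a \<Rightarrow> bool) \<Rightarrow> ('a \<Rightarrow> 'a \<Rightarrow> enat) \<Rightarrow> 'a set \<Rightarrow> bool" where
  "local_resolving V E d S \<longleftrightarrow> S \<subseteq> V \<and>
     (\<forall>x\<in>V. \<forall>y\<in>V. E x y \<longrightarrow> (\<exists>s\<in>S. d s x \<noteq> d s y))"

definition local_metric_dim :: "'a set \<Rightarrow> ('a \<Rightarrow> 'a \<Rightarrow> bool) \<Rightarrow> nat" where
  "local_metric_dim V E = (LEAST k. \<exists>S. local_resolving V E (gdist V E) S \<and> card S = k)"

definition local_adj_dim :: "'a set \<Rightarrow> ('a \<Rightarrow> 'a \<Rightarrow> bool) \<Rightarrow> nat" where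
  "local_adj_dim V E = (LEAST k. \<exists>S. local_resolving V E (gdist2 V E) S \<and> card S = k)"

definition local_adj_basis :: "'a set \<Rightarrow> ('a \<Rightarrow> 'a \<Rightarrow> bool) \<Rightarrow> 'a set \<Rightarrow> bool" where
  "local_adj_basis V E B \<longleftrightarrow> local_resolving V E (gdist2 V E) B \<and> card B = local_adj_dim V E"

definition open_nbhd :: "'a set \<Rightarrow> ('a \<Rightarrow> 'a \<Rightarrow> bool) \<Rightarrow> 'a \<Rightarrow> 'a set" where
  "open_nbhd V E v = {w\<in>V. E v w}"

definition closed_nbhd :: "'a set \<Rightarrow> ('a \<Rightarrow> 'a \<Rightarrow> bool) \<Rightarrow> 'a \<Rightarrow> 'a set" where
  "closed_nbhd V E v = insert v (open_nbhd V E v)"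

definition edgeless :: "'a set \<Rightarrow> ('a \<Rightarrow> 'a \<Rightarrow> bool) \<Rightarrow> bool" where
  "edgeless V E \<longleftrightarrow> (\<forall>x\<in>V. \<forall>y\<in>V. \<not> E x y)"

definition class_G :: "'a set \<Rightarrow> ('a \<Rightarrow> 'a \<Rightarrow> bool) \<Rightarrow> bool" where
  "class_G V E \<longleftrightarrow> (\<forall>B. local_adj_basis V E B \<longrightarrow> (\<exists>v\<in>V. B \<subseteq> open_nbhd V E v))"

definition true_twins :: "'a set \<Rightarrow> ('a \<Rightarrow> 'a \<Rightarrow> bool) \<Rightarrow> 'a \<Rightarrow> 'a \<Rightarrow> bool" where
  "true_twins V E x y \<longleftrightarrow> closed_nbhd V E x = closed_nbhd V E y"

definition twin_class :: "'a set \<Rightarrow> ('a \<Rightarrow> 'a \<Rightarrow> bool) \<Rightarrow> 'a \<Rightarrow> 'a set" where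
  "twin_class V E x = {y\<in>V. true_twins V E x y}"

definition twin_set :: "'a set \<Rightarrow> ('a \<Rightarrow> 'a \<Rightarrow> bool) \<Rightarrow> 'a set" where
  "twin_set V E = \<Union>{twin_class V E x |x. x \<in> V \<and> card (twin_class V E x) \<ge> 2}"

text \<open>Lexicographic product G \<circ> H, with G indexed by its own vertices.\<close>
definition lex_V :: "'a set \<Rightarrow> ('a \<Rightarrow> 'b set) \<Rightarrow> ('a \<times> 'b) set" where
  "lex_V V HV = Sigma V HV"

definition lex_E :: "'a set \<Rightarrow> ('a \<Rightarrow> 'a \<Rightarrow> bool) \<Rightarrow> ('a \<Rightarrow> 'b set) \<Rightarrow> ('a \<Rightarrow> 'b \<Rightarrow> 'b \<Rightarrow> bool)
    \<Rightarrow> ('a \<times> 'b) \<Rightarrow> ('a \<times> 'b) \<Rightarrow> bool" where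
  "lex_E V E HV HE x y \<longleftrightarrow> x \<in> lex_V V HV \<and> y \<in> lex_V V HV \<and>
     (E (fst x) (fst y) \<or> (fst x = fst y \<and> HE (fst x) (snd x) (snd y)))"

end

theory Submission
  imports Defs
begin

text \<open>In \<open>G \<circ> \<H>\<close> two vertices in different copies are at the distance of their base vertices
  in \<open>G\<close>, while two vertices of the same copy \<open>H_i\<close> are at distance \<open>d_{H_i,2}\<close>, because
  \<open>u_i\<close> has a neighbour in \<open>G\<close>. Hence every local resolving set \<open>S\<close> of the product meets
  each copy in a local adjacency generator of \<open>H_i\<close>, so \<open>dim_l(G \<circ> \<H>) \<ge> \<Sum> adim_l(H_i)\<close>,
  and equality holds iff some resolving set is a union of local adjacency bases \<open>B_i\<close>.
  Such a union resolves an edge \<open>(u_i,a)(u_j,b)\<close> between copies either inside copy \<open>i\<close>,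
  by a vertex of \<open>B_i\<close> not adjacent to \<open>a\<close> (always available for a suitable \<open>B_i\<close> iff
  \<open>H_i \<notin> \<G>\<close>), or from a third copy \<open>u\<close> with \<open>d_G(u,u_i) \<noteq> d_G(u,u_j)\<close> and \<open>B_u \<noteq> {}\<close>,
  i.e. \<open>H_u\<close> not edgeless. True twins are at equal distance from every other vertex, which
  forces (b); and an edgeless copy at a vertex of \<open>T(G)\<close> can be replaced by a twin copy,
  which explains why only \<open>V_E\<close> is excluded in (a).\<close>

lemma walk_0_iff: "walk V E 0 x y \<longleftrightarrow> x = y \<and> x \<in> V"
proof
  assume "walk V E 0 x y" then show "x = y \<and> x \<in> V" unfolding walk_def by auto
next
  assume "x = y \<and> x \<in> V" then show "walk V E 0 x y" unfolding walk_def
    by (intro exI[of _ "\<lambda>_. x"]) auto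
qed

lemma walk_Suc_iff: "walk V E (Suc n) x z \<longleftrightarrow> (\<exists>y. walk V E n x y \<and> E y z \<and> z \<in> V)"
proof
  assume "walk V E (Suc n) x z"
  then obtain p where p: "p 0 = x" "p (Suc n) = z" "\<forall>i\<le>Suc n. p i \<in> V"
      "\<forall>i<Suc n. E (p i) (p (Suc i))"
    unfolding walk_def by blast
  then have "walk V E n x (p n)" unfolding walk_def by (intro exI[of _ p]) auto
  with p show "\<exists>y. walk V E n x y \<and> E y z \<and> z \<in> V" by auto
next
  assume "\<exists>y. walk V E n x y \<and> E y z \<and> z \<in> V"
  then obtain p where p: "p 0 = x" "\<forall>i\<le>n. p i \<in> V" "\<forall>i<n. E (p i) (p (Suc i))"
      and z: "E (p n) z" "z \<in> V"
    unfolding walk_def by blast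
  show "walk V E (Suc n) x z" unfolding walk_def
  proof (intro exI[of _ "p(Suc n := z)"] conjI allI impI)
    fix i assume "i \<le> Suc n"
    then show "(p(Suc n := z)) i \<in> V" using p z by (cases "i = Suc n") auto
  next
    fix i assume "i < Suc n"
    then show "E ((p(Suc n := z)) i) ((p(Suc n := z)) (Suc i))"
      using p z by (cases "i = n") auto
  qed (use p in simp_all)
qed

lemma walk_Suc_0_iff: "walk V E (Suc 0) x y \<longleftrightarrow> x \<in> V \<and> E x y \<and> y \<in> V"
  by (auto simp: walk_Suc_iff walk_0_iff)

lemma walk_reverse:
  assumes sym: "\<And>x y. E x y \<Longrightarrow> E y x" and "walk V E n x y"
  shows "walk V E n y x"
proof -
  obtain p where p: "p 0 = x" "p n = y" "\<forall>i\<le>n. p i \<in> V" "\<forall>i<n. E (p i) (p (Suc i))"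
    using assms(2) unfolding walk_def by blast
  show ?thesis unfolding walk_def
  proof (intro exI[of _ "\<lambda>i. p (n - i)"] conjI allI impI)
    fix i assume "i < n"
    then have "E (p (n - Suc i)) (p (Suc (n - Suc i)))" using p(4) by simp
    moreover have "Suc (n - Suc i) = n - i" using \<open>i < n\<close> by simp
    ultimately have "E (p (n - Suc i)) (p (n - i))" by simp
    then show "E (p (n - i)) (p (n - Suc i))" by (rule sym)
  qed (use p in auto)
qed

lemma walk_Suc_iff_first:
  assumes sym: "\<And>x y. E x y \<Longrightarrow> E y x"
  shows "walk V E (Suc m) x z \<longleftrightarrow> (\<exists>y. x \<in> V \<and> E x y \<and> walk V E m y z)"
proof -
  have "walk V E (Suc m) x z \<longleftrightarrow> walk V E (Suc m) z x"
    using walk_reverse[where E=E, OF sym] by blast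
  also have "\<dots> \<longleftrightarrow> (\<exists>y. walk V E m z y \<and> E y x \<and> x \<in> V)"
    by (rule walk_Suc_iff)
  also have "\<dots> \<longleftrightarrow> (\<exists>y. x \<in> V \<and> E x y \<and> walk V E m y z)"
    using walk_reverse[where E=E, OF sym] sym by blast
  finally show ?thesis .
qed

lemma gdist_le_walk: "walk V E n x y \<Longrightarrow> gdist V E x y \<le> enat n"
  unfolding gdist_def by (rule INF_lower) simp

lemma gdist_greatest: "(\<And>n. walk V E n x y \<Longrightarrow> d \<le> enat n) \<Longrightarrow> d \<le> gdist V E x y"
  unfolding gdist_def by (rule INF_greatest) simp

lemma gdist_eq_shortest_walk:
  assumes "walk V E n x y" and "\<And>m. m < n \<Longrightarrow> \<not> walk V E m x y"
  shows "gdist V E x y = enat n"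
proof (rule antisym)
  show "gdist V E x y \<le> enat n" using assms(1) by (rule gdist_le_walk)
  show "enat n \<le> gdist V E x y"
    by (rule gdist_greatest) (metis assms(2) enat_ord_simps(1) not_le)
qed

lemma walk_if_gdist_finite: "gdist V E x y \<noteq> \<infinity> \<Longrightarrow> \<exists>n. walk V E n x y"
  unfolding gdist_def by (auto simp: top_enat_def[symmetric])

lemma gdist_commute: "(\<And>x y. E x y \<Longrightarrow> E y x) \<Longrightarrow> gdist V E x y = gdist V E y x"
  by (intro antisym gdist_greatest) (metis gdist_le_walk walk_reverse)+

lemma gdist_self: "x \<in> V \<Longrightarrow> gdist V E x x = 0"
  using gdist_eq_shortest_walk[of V E 0 x x] by (simp add: walk_0_iff zero_enat_def)

lemma gdist_adjacent: "x \<in> V \<Longrightarrow> y \<in> V \<Longrightarrow> E x y \<Longrightarrow> x \<noteq> y \<Longrightarrow> gdist V E x y = 1"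
  using gdist_eq_shortest_walk[of V E "Suc 0" x y] by (auto simp: walk_0_iff walk_Suc_0_iff one_enat_def)

lemma gdist_not_adjacent:
  assumes "x \<noteq> y" and "\<not> E x y"
  shows "2 \<le> gdist V E x y"
proof (rule gdist_greatest)
  fix n assume w: "walk V E n x y"
  have "n \<noteq> 0" "n \<noteq> 1" using w assms walk_0_iff walk_Suc_0_iff One_nat_def by metis+
  then show "2 \<le> enat n" by (simp add: numeral_eq_enat)
qed

lemma gdist2_eq:
  assumes "graph V E" and "x \<in> V" and "y \<in> V"
  shows "gdist2 V E x y = (if x = y then 0 else if E x y then 1 else 2)"
proof -
  consider "x = y" | "x \<noteq> y" "E x y" | "x \<noteq> y" "\<not> E x y" by blast
  then show ?thesis
  proof cases
    case 3
    then have "2 \<le> gdist V E x y" by (rule gdist_not_adjacent)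
    with 3 show ?thesis by (simp add: gdist2_def min_def)
  qed (use assms gdist_self[of x V E] gdist_adjacent[of x V y E] in \<open>auto simp: gdist2_def\<close>)
qed

lemma local_resolving_gdist_self:
  assumes "\<And>x. \<not> E x x"
  shows "local_resolving V E (gdist V E) V"
  unfolding local_resolving_def
proof (intro conjI ballI impI)
  fix x y assume "x \<in> V" "y \<in> V" "E x y"
  then have "gdist V E x x = 0" "gdist V E x y = 1"
    using assms gdist_self gdist_adjacent by metis+
  with \<open>x \<in> V\<close> show "\<exists>s\<in>V. gdist V E s x \<noteq> gdist V E s y" by force
qed simp

lemma local_resolving_gdist2_self:
  assumes "graph V E"
  shows "local_resolving V E (gdist2 V E) V"
  unfolding local_resolving_def
proof (intro conjI ballI impI)
  fix x y assume "x \<in> V" "y \<in> V" "E x y"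
  moreover from \<open>E x y\<close> have "x \<noteq> y" using assms by (auto simp: graph_def)
  ultimately have "gdist2 V E x x \<noteq> gdist2 V E x y"
    using assms by (simp add: gdist2_eq)
  with \<open>x \<in> V\<close> show "\<exists>s\<in>V. gdist2 V E s x \<noteq> gdist2 V E s y" by blast
qed simp

lemma local_metric_dim_le_card:
  "local_resolving V E (gdist V E) S \<Longrightarrow> local_metric_dim V E \<le> card S"
  unfolding local_metric_dim_def by (rule Least_le) blast

lemma local_metric_dim_attained:
  assumes "\<And>x. \<not> E x x"
  obtains S where "local_resolving V E (gdist V E) S" and "card S = local_metric_dim V E"
  using LeastI_ex[where P = "\<lambda>k. \<exists>S. local_resolving V E (gdist V E) S \<and> card S = k"]
    local_resolving_gdist_self[where E=E, OF assms]
  unfolding local_metric_dim_def by blast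

lemma local_adj_dim_le_card:
  "local_resolving V E (gdist2 V E) S \<Longrightarrow> local_adj_dim V E \<le> card S"
  unfolding local_adj_dim_def by (rule Least_le) blast

lemma local_adj_basis_exists:
  assumes "graph V E"
  shows "\<exists>B. local_adj_basis V E B"
  using LeastI_ex[where P = "\<lambda>k. \<exists>S. local_resolving V E (gdist2 V E) S \<and> card S = k"]
    local_resolving_gdist2_self[OF assms]
  unfolding local_adj_basis_def local_adj_dim_def by blast

lemma local_adj_basis_edgeless:
  assumes "graph V E" and "edgeless V E" and "local_adj_basis V E B"
  shows "B = {}"
proof -
  have "local_resolving V E (gdist2 V E) {}"
    using assms(2) by (simp add: local_resolving_def edgeless_def)
  then have "card B = 0"
    using assms(3) local_adj_dim_le_card by (fastforce simp: local_adj_basis_def)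
  moreover have "finite B"
    using assms(1,3) finite_subset
    by (auto simp: local_adj_basis_def local_resolving_def graph_def)
  ultimately show ?thesis by simp
qed

lemma local_adj_basis_nonempty:
  assumes "\<not> edgeless V E" and "local_adj_basis V E B"
  shows "B \<noteq> {}"
  using assms by (auto simp: edgeless_def local_adj_basis_def local_resolving_def)

lemma edgeless_imp_class_G:
  assumes "graph V E" and "edgeless V E"
  shows "class_G V E"
  unfolding class_G_def
proof (intro allI impI)
  fix B assume "local_adj_basis V E B"
  then have "B = {}" using local_adj_basis_edgeless[OF assms] by simp
  moreover obtain v where "v \<in> V" using assms(1) by (auto simp: graph_def)
  ultimately show "\<exists>v\<in>V. B \<subseteq> open_nbhd V E v" by auto
qed

lemma local_adj_basis_exists_not_in_nbhd:
  assumes "graph V E"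
  shows "\<exists>B. local_adj_basis V E B \<and> (\<not> class_G V E \<longrightarrow> (\<forall>v\<in>V. \<not> B \<subseteq> open_nbhd V E v))"
  using local_adj_basis_exists[OF assms] unfolding class_G_def by blast

lemma true_twins_adjacent: "true_twins V E x y \<Longrightarrow> x \<noteq> y \<Longrightarrow> y \<in> V \<Longrightarrow> E x y"
  by (auto simp: true_twins_def closed_nbhd_def open_nbhd_def)

lemma true_twins_gdist_le:
  assumes "graph V E" and "true_twins V E u u'" and "x \<noteq> u" and "x \<noteq> u'"
  shows "gdist V E u' x \<le> gdist V E u x"
proof (rule gdist_greatest)
  have sym: "\<And>x y. E x y \<Longrightarrow> E y x" and EV: "\<And>x y. E x y \<Longrightarrow> x \<in> V \<and> y \<in> V"
    using assms(1) by (auto simp: graph_def)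
  fix n assume w: "walk V E n u x"
  then obtain m where n: "n = Suc m" using assms(3) by (metis walk_0_iff not0_implies_Suc)
  then obtain y where y: "E u y" "walk V E m y x" using w walk_Suc_iff_first[where E=E, OF sym] by blast
  then have "y \<in> closed_nbhd V E u'"
    using assms(2) EV by (auto simp: true_twins_def closed_nbhd_def open_nbhd_def)
  then consider "y = u'" | "u' \<in> V" "E u' y" using EV by (auto simp: closed_nbhd_def open_nbhd_def)
  then show "gdist V E u' x \<le> enat n"
  proof cases
    case 1
    then have "gdist V E u' x \<le> enat m" using y gdist_le_walk by metis
    then show ?thesis using n order_trans by fastforce
  next
    case 2
    then have "walk V E n u' x" using n y walk_Suc_iff_first[where E=E, OF sym] by blast
    then show ?thesis by (rule gdist_le_walk)
  qed
qed

lemma true_twins_gdist_eq: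
  assumes "graph V E" and "true_twins V E u u'" and "x \<noteq> u" and "x \<noteq> u'"
  shows "gdist V E u x = gdist V E u' x"
  using assms true_twins_gdist_le[OF assms(1)]
  by (metis antisym true_twins_def)

lemma gdist_to_true_twins_eq:
  assumes "graph V E" and "true_twins V E u u'" and "x \<noteq> u" and "x \<noteq> u'"
  shows "gdist V E x u = gdist V E x u'"
  using true_twins_gdist_eq[OF assms] assms(1) gdist_commute[where E=E]
  by (metis graph_def)

lemma twin_set_obtain_twin:
  assumes "u \<in> twin_set V E"
  obtains u' where "u' \<in> V" "u' \<noteq> u" "true_twins V E u u'"
proof -
  obtain z where z: "card (twin_class V E z) \<ge> 2" "u \<in> twin_class V E z"
    using assms unfolding twin_set_def by blast
  then obtain u' where "u' \<in> twin_class V E z" "u' \<noteq> u"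
    by (metis card_le_Suc0_iff_eq not_less_eq_eq numeral_2_eq_2 card.infinite zero_le)
  with z show ?thesis using that by (auto simp: twin_class_def true_twins_def)
qed

lemma card_twin_classes_le_1_iff:
  assumes "finite V"
  shows "(\<forall>x\<in>V. card {y\<in>twin_class V E x. P y} \<le> 1) \<longleftrightarrow>
    (\<forall>y1\<in>V. \<forall>y2\<in>V. true_twins V E y1 y2 \<longrightarrow> P y1 \<longrightarrow> P y2 \<longrightarrow> y1 = y2)"
proof -
  have fin: "finite {y\<in>twin_class V E x. P y}" for x
    using assms by (rule finite_subset[rotated]) (auto simp: twin_class_def)
  have "card {y\<in>twin_class V E x. P y} \<le> 1 \<longleftrightarrow>
      (\<forall>y1\<in>twin_class V E x. \<forall>y2\<in>twin_class V E x. P y1 \<longrightarrow> P y2 \<longrightarrow> y1 = y2)" for x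
    using card_le_Suc0_iff_eq[OF fin] by auto
  moreover have "x \<in> twin_class V E x" if "x \<in> V" for x
    using that by (simp add: twin_class_def true_twins_def)
  ultimately show ?thesis by (auto simp: twin_class_def true_twins_def)
qed

definition fibre :: "('a \<times> 'b) set \<Rightarrow> 'a \<Rightarrow> 'b set" where
  "fibre S i = {c. (i, c) \<in> S}"

lemma card_eq_sum_card_fibre:
  assumes "finite I" and "\<And>i. i \<in> I \<Longrightarrow> finite (A i)" and "S \<subseteq> Sigma I A"
  shows "card S = (\<Sum>i\<in>I. card (fibre S i))"
proof -
  have "S = Sigma I (fibre S)" using assms(3) by (auto simp: fibre_def)
  moreover have "finite (fibre S i)" if "i \<in> I" for i
    using assms(2)[OF that] by (rule finite_subset[rotated]) (use assms(3) in \<open>auto simp: fibre_def\<close>)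
  ultimately show ?thesis using card_SigmaI[OF assms(1)] by metis
qed

locale lex_product =
  fixes V :: "'a set" and E :: "'a \<Rightarrow> 'a \<Rightarrow> bool"
    and HV :: "'a \<Rightarrow> 'b set" and HE :: "'a \<Rightarrow> 'b \<Rightarrow> 'b \<Rightarrow> bool"
  assumes connected: "connected_graph V E" and two_vertices: "card V \<ge> 2"
    and factor_graph: "\<forall>u\<in>V. graph (HV u) (HE u)"
begin

abbreviation PV where "PV \<equiv> lex_V V HV"
abbreviation PE where "PE \<equiv> lex_E V E HV HE"
abbreviation dP where "dP \<equiv> gdist PV PE"

lemma graph_G: "graph V E"
  using connected by (simp add: connected_graph_def)

lemma finite_V: "finite V"
  and E_sym: "E x y \<Longrightarrow> E y x"
  and E_in_V: "E x y \<Longrightarrow> x \<in> V \<and> y \<in> V"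
  and E_irrefl: "\<not> E x x"
  using graph_G by (auto simp: graph_def)

lemma factor_nonempty: "i \<in> V \<Longrightarrow> HV i \<noteq> {}"
  and factor_finite: "i \<in> V \<Longrightarrow> finite (HV i)"
  and factor_sym: "i \<in> V \<Longrightarrow> HE i a b \<Longrightarrow> HE i b a"
  and factor_irrefl: "i \<in> V \<Longrightarrow> \<not> HE i a a"
  using factor_graph by (auto simp: graph_def)

lemma gdist2_factor:
  "i \<in> V \<Longrightarrow> c \<in> HV i \<Longrightarrow> a \<in> HV i \<Longrightarrow>
    gdist2 (HV i) (HE i) c a = (if c = a then 0 else if HE i c a then 1 else 2)"
  by (rule gdist2_eq[OF factor_graph[rule_format]])

lemma mem_PV_iff [simp]: "(i, a) \<in> PV \<longleftrightarrow> i \<in> V \<and> a \<in> HV i"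
  by (simp add: lex_V_def)

lemma PE_iff: "PE (i, a) (j, b) \<longleftrightarrow> i \<in> V \<and> a \<in> HV i \<and> j \<in> V \<and> b \<in> HV j \<and>
    (E i j \<or> (i = j \<and> HE i a b))"
  by (auto simp: lex_E_def lex_V_def)

lemma PE_irrefl: "\<not> PE x x"
  using E_irrefl factor_irrefl by (cases x) (auto simp: PE_iff)

lemma has_neighbour:
  assumes "i \<in> V"
  obtains j where "E i j"
proof -
  obtain j where j: "j \<in> V" "j \<noteq> i"
    using two_vertices assms
    by (metis card_le_Suc0_iff_eq finite_V not_less_eq_eq numeral_2_eq_2)
  then obtain n where w: "walk V E n i j"
    using connected assms walk_if_gdist_finite by (metis connected_graph_def)
  then obtain m where "n = Suc m" using j by (metis walk_0_iff not0_implies_Suc)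
  then show ?thesis using w walk_Suc_iff_first[where E=E] E_sym that by blast
qed

lemma walk_PE_project:
  "walk PV PE n x y \<Longrightarrow> \<exists>m\<le>n. walk V E m (fst x) (fst y)"
proof (induction n arbitrary: y)
  case 0 then show ?case by (auto simp: walk_0_iff lex_V_def)
next
  case (Suc n)
  then obtain y' where y': "walk PV PE n x y'" "PE y' y" by (auto simp: walk_Suc_iff)
  then obtain m where m: "m \<le> n" "walk V E m (fst x) (fst y')" using Suc.IH by blast
  show ?case
  proof (cases "E (fst y') (fst y)")
    case True
    then have "walk V E (Suc m) (fst x) (fst y)" using m E_in_V by (auto simp: walk_Suc_iff)
    then show ?thesis using m by (intro exI[of _ "Suc m"]) auto
  next
    case False
    then have "fst y' = fst y" using y'(2) by (auto simp: lex_E_def)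
    then show ?thesis using m le_SucI by metis
  qed
qed

lemma walk_PE_lift:
  "walk V E n k i \<Longrightarrow> 0 < n \<Longrightarrow> c \<in> HV k \<Longrightarrow> a \<in> HV i \<Longrightarrow> walk PV PE n (k, c) (i, a)"
proof (induction n arbitrary: i a)
  case 0 then show ?case by simp
next
  case (Suc n)
  then obtain y where y: "walk V E n k y" "E y i" by (auto simp: walk_Suc_iff)
  have "y \<in> V" using E_in_V y(2) by blast
  then obtain d where d: "d \<in> HV y" using factor_nonempty by blast
  show ?case
  proof (cases n)
    case 0
    then show ?thesis using Suc.prems y by (auto simp: walk_0_iff walk_Suc_0_iff PE_iff)
  next
    case (Suc n')
    then have "walk PV PE n (k, c) (y, d)" using Suc.IH[OF y(1)] Suc.prems d by simp
    moreover have "PE (y, d) (i, a)" using y \<open>y \<in> V\<close> d Suc.prems E_in_V by (auto simp: PE_iff)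
    ultimately show ?thesis using Suc.prems E_in_V y by (auto simp: walk_Suc_iff lex_V_def)
  qed
qed

lemma dP_other_copy:
  assumes "k \<in> V" and "i \<in> V" and "k \<noteq> i" and "c \<in> HV k" and "a \<in> HV i"
  shows "dP (k, c) (i, a) = gdist V E k i"
proof (rule antisym)
  show "dP (k, c) (i, a) \<le> gdist V E k i"
  proof (rule gdist_greatest)
    fix n assume w: "walk V E n k i"
    then have "0 < n" using assms(3) by (metis gr0I walk_0_iff)
    then show "dP (k, c) (i, a) \<le> enat n"
      by (rule gdist_le_walk[OF walk_PE_lift[OF w _ assms(4,5)]])
  qed
  show "gdist V E k i \<le> dP (k, c) (i, a)"
  proof (rule gdist_greatest)
    fix n assume "walk PV PE n (k, c) (i, a)"
    then obtain m where "m \<le> n" "walk V E m k i" using walk_PE_project by fastforce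
    then show "gdist V E k i \<le> enat n" by (metis gdist_le_walk enat_ord_simps(1) order_trans)
  qed
qed

text \<open>Within a copy, any two non-adjacent vertices have a common neighbour in a neighbouring
  copy, so distances are truncated at 2.\<close>

lemma dP_same_copy:
  assumes "i \<in> V" and "c \<in> HV i" and "a \<in> HV i"
  shows "dP (i, c) (i, a) = gdist2 (HV i) (HE i) c a"
proof -
  have ca: "(i, c) \<in> PV" "(i, a) \<in> PV" using assms by (simp_all add: mem_PV_iff)
  have w0: "walk PV PE 0 (i, c) (i, a) \<longleftrightarrow> c = a"
    using ca by (auto simp: walk_0_iff)
  have w1: "walk PV PE (Suc 0) (i, c) (i, a) \<longleftrightarrow> HE i c a"
    using assms E_irrefl by (auto simp: walk_Suc_0_iff PE_iff)
  consider "c = a" | "c \<noteq> a" "HE i c a" | "c \<noteq> a" "\<not> HE i c a" by blast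
  then show ?thesis
  proof cases
    case 1 then show ?thesis using gdist_self[OF ca(1)] by (simp add: gdist2_factor assms)
  next
    case 2
    then have "dP (i, c) (i, a) = enat (Suc 0)"
      using w0 w1 by (intro gdist_eq_shortest_walk) auto
    then show ?thesis using 2 by (simp add: gdist2_factor assms one_enat_def)
  next
    case 3
    obtain j where j: "E i j" using has_neighbour assms(1) by blast
    then obtain d where d: "d \<in> HV j" using factor_nonempty E_in_V by blast
    have "walk PV PE (Suc 0) (i, c) (j, d)" "PE (j, d) (i, a)"
      using assms j d E_in_V E_sym by (auto simp: walk_Suc_0_iff PE_iff)
    then have "walk PV PE (Suc (Suc 0)) (i, c) (i, a)"
      using ca by (auto simp: walk_Suc_iff[of _ _ "Suc 0"])
    then have "dP (i, c) (i, a) = enat (Suc (Suc 0))"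
      using w0 w1 3 by (intro gdist_eq_shortest_walk) (auto simp: less_Suc_eq)
    then show ?thesis using 3 by (simp add: gdist2_factor assms numeral_eq_enat)
  qed
qed

lemma dP_distinguishes_cross_edge:
  assumes "E i j" and "a \<in> HV i" and "b \<in> HV j" and "k \<in> V" and "c \<in> HV k"
  shows "dP (k, c) (i, a) \<noteq> dP (k, c) (j, b) \<longleftrightarrow>
    (k \<noteq> i \<and> k \<noteq> j \<and> gdist V E k i \<noteq> gdist V E k j) \<or> (k = i \<and> \<not> HE i c a) \<or> (k = j \<and> \<not> HE j c b)"
proof -
  have V: "i \<in> V" "j \<in> V" and "i \<noteq> j" using assms(1) E_in_V E_irrefl by blast+
  then have "gdist V E i j = 1" "gdist V E j i = 1"
    using assms(1) E_sym gdist_adjacent by metis+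
  then consider "k = i" "dP (k, c) (j, b) = 1" | "k = j" "dP (k, c) (i, a) = 1"
    | "k \<noteq> i" "k \<noteq> j"
    using dP_other_copy V \<open>i \<noteq> j\<close> assms by metis
  then show ?thesis
  proof cases
    case 1
    then show ?thesis
      using V \<open>i \<noteq> j\<close> assms dP_same_copy factor_irrefl by (auto simp: gdist2_factor)
  next
    case 2
    then show ?thesis
      using V \<open>i \<noteq> j\<close> assms dP_same_copy factor_irrefl by (auto simp: gdist2_factor)
  next
    case 3
    then show ?thesis using V assms dP_other_copy by simp
  qed
qed

lemma dP_distinguishes_copy_edge:
  assumes "i \<in> V" and "a \<in> HV i" and "b \<in> HV i" and "k \<in> V" and "c \<in> HV k"
  shows "dP (k, c) (i, a) \<noteq> dP (k, c) (i, b) \<longleftrightarrow>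
    k = i \<and> gdist2 (HV i) (HE i) c a \<noteq> gdist2 (HV i) (HE i) c b"
  using assms dP_same_copy dP_other_copy by (cases "k = i") auto

lemma local_resolving_PE_obtain:
  assumes "local_resolving PV PE dP S" and "PE x y"
  obtains k c where "(k, c) \<in> S" "k \<in> V" "c \<in> HV k" "dP (k, c) x \<noteq> dP (k, c) y"
proof -
  have "x \<in> PV" "y \<in> PV" using assms(2) by (simp_all add: lex_E_def)
  then obtain s where "s \<in> S" "dP s x \<noteq> dP s y"
    using assms unfolding local_resolving_def by blast
  moreover have "S \<subseteq> PV" using assms(1) by (simp add: local_resolving_def)
  ultimately show ?thesis using that by (cases s) auto
qed

lemma local_resolving_fibre:
  assumes "local_resolving PV PE dP S" and "i \<in> V"
  shows "local_resolving (HV i) (HE i) (gdist2 (HV i) (HE i)) (fibre S i)"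
  unfolding local_resolving_def
proof (intro conjI ballI impI)
  show "fibre S i \<subseteq> HV i" using assms(1) by (auto simp: fibre_def local_resolving_def)
  fix a b assume ab: "a \<in> HV i" "b \<in> HV i" "HE i a b"
  then have "PE (i, a) (i, b)" using assms(2) by (simp add: PE_iff)
  then obtain k c where "(k, c) \<in> S" "k \<in> V" "c \<in> HV k" "dP (k, c) (i, a) \<noteq> dP (k, c) (i, b)"
    by (rule local_resolving_PE_obtain[OF assms(1)])
  then show "\<exists>s\<in>fibre S i. gdist2 (HV i) (HE i) s a \<noteq> gdist2 (HV i) (HE i) s b"
    using dP_distinguishes_copy_edge assms(2) ab by (auto simp: fibre_def)
qed

lemma card_eq_sum_card_fibre_PV:
  "S \<subseteq> PV \<Longrightarrow> card S = (\<Sum>i\<in>V. card (fibre S i))"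
  using card_eq_sum_card_fibre[OF finite_V factor_finite] by (simp add: lex_V_def)

lemma sum_local_adj_dim_le_card:
  assumes "local_resolving PV PE dP S"
  shows "(\<Sum>i\<in>V. local_adj_dim (HV i) (HE i)) \<le> card S"
proof -
  have "(\<Sum>i\<in>V. local_adj_dim (HV i) (HE i)) \<le> (\<Sum>i\<in>V. card (fibre S i))"
    using local_adj_dim_le_card local_resolving_fibre[OF assms] by (intro sum_mono) blast
  also have "\<dots> = card S"
    using assms by (simp add: card_eq_sum_card_fibre_PV local_resolving_def)
  finally show ?thesis .
qed

lemma local_metric_dim_eq_sum_iff:
  "local_metric_dim PV PE = (\<Sum>i\<in>V. local_adj_dim (HV i) (HE i)) \<longleftrightarrow>
    (\<exists>S. local_resolving PV PE dP S \<and> card S = (\<Sum>i\<in>V. local_adj_dim (HV i) (HE i)))"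
proof -
  obtain S0 where S0: "local_resolving PV PE dP S0" "card S0 = local_metric_dim PV PE"
    using local_metric_dim_attained[where E = PE] PE_irrefl by blast
  show ?thesis
    using local_metric_dim_le_card sum_local_adj_dim_le_card S0 by (metis antisym)
qed

text \<open>Every fibre is a local adjacency generator, so a resolving set of size
  \<open>\<Sum>i. adim_l(H_i)\<close> has no room to spare.\<close>

lemma fibre_local_adj_basis:
  assumes "local_resolving PV PE dP S" and "card S = (\<Sum>i\<in>V. local_adj_dim (HV i) (HE i))"
    and "i \<in> V"
  shows "local_adj_basis (HV i) (HE i) (fibre S i)"
proof (rule ccontr)
  assume "\<not> local_adj_basis (HV i) (HE i) (fibre S i)"
  have le: "\<forall>x\<in>V. local_adj_dim (HV x) (HE x) \<le> card (fibre S x)"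
    using local_adj_dim_le_card local_resolving_fibre[OF assms(1)] by blast
  have "local_adj_dim (HV i) (HE i) < card (fibre S i)"
    using \<open>\<not> local_adj_basis _ _ _\<close> local_resolving_fibre[OF assms(1,3)] le assms(3)
    by (fastforce simp: local_adj_basis_def)
  then have "(\<Sum>i\<in>V. local_adj_dim (HV i) (HE i)) < (\<Sum>i\<in>V. card (fibre S i))"
    using sum_strict_mono_ex1[OF finite_V le] assms(3) by blast
  then show False
    using assms(1,2) by (simp add: card_eq_sum_card_fibre_PV local_resolving_def)
qed

abbreviation separation_condition :: bool where
  "separation_condition \<equiv>
    \<forall>ui\<in>{u\<in>V. class_G (HV u) (HE u)}. \<forall>uj\<in>{u\<in>V. class_G (HV u) (HE u)}.
      E ui uj \<and> \<not> true_twins V E ui uj \<longrightarrow>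
      (\<exists>u\<in>V - ({u\<in>V - twin_set V E. edgeless (HV u) (HE u)} \<union> {ui, uj}).
         gdist V E u ui \<noteq> gdist V E u uj)"

abbreviation twin_condition :: bool where
  "twin_condition \<equiv> \<forall>y1\<in>V. \<forall>y2\<in>V. true_twins V E y1 y2 \<longrightarrow>
    class_G (HV y1) (HE y1) \<longrightarrow> class_G (HV y2) (HE y2) \<longrightarrow> y1 = y2"

text \<open>If the fibres at \<open>y1\<close> and \<open>y2\<close> lie in the neighbourhoods of \<open>a\<close> and \<open>b\<close>, then no vertex
  of either copy separates the edge \<open>(y1, a)(y2, b)\<close>.\<close>

lemma tight_class_G_edge_separated:
  assumes S: "local_resolving PV PE dP S" "card S = (\<Sum>i\<in>V. local_adj_dim (HV i) (HE i))"
    and "E y1 y2" and "class_G (HV y1) (HE y1)" and "class_G (HV y2) (HE y2)"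
  shows "\<exists>k\<in>V. k \<noteq> y1 \<and> k \<noteq> y2 \<and> \<not> edgeless (HV k) (HE k) \<and> gdist V E k y1 \<noteq> gdist V E k y2"
proof -
  have y: "y1 \<in> V" "y2 \<in> V" using assms(3) E_in_V by blast+
  obtain a where a: "a \<in> HV y1" "fibre S y1 \<subseteq> open_nbhd (HV y1) (HE y1) a"
    using assms(4) fibre_local_adj_basis[OF S y(1)] unfolding class_G_def by blast
  obtain b where b: "b \<in> HV y2" "fibre S y2 \<subseteq> open_nbhd (HV y2) (HE y2) b"
    using assms(5) fibre_local_adj_basis[OF S y(2)] unfolding class_G_def by blast
  have "PE (y1, a) (y2, b)" using y a b assms(3) by (simp add: PE_iff)
  then obtain k c where kc: "(k, c) \<in> S" "k \<in> V" "c \<in> HV k" "dP (k, c) (y1, a) \<noteq> dP (k, c) (y2, b)"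
    by (rule local_resolving_PE_obtain[OF S(1)])
  have "k = y1 \<Longrightarrow> HE y1 c a" and "k = y2 \<Longrightarrow> HE y2 c b"
    using a(2) b(2) kc(1) factor_sym y by (auto simp: fibre_def open_nbhd_def)
  then have k: "k \<noteq> y1" "k \<noteq> y2" "gdist V E k y1 \<noteq> gdist V E k y2"
    using kc(4) dP_distinguishes_cross_edge[OF assms(3) a(1) b(1) kc(2,3)] by auto
  have "fibre S k \<noteq> {}" using kc(1) by (auto simp: fibre_def)
  then have "\<not> edgeless (HV k) (HE k)"
    using local_adj_basis_edgeless fibre_local_adj_basis[OF S kc(2)] factor_graph kc(2) by blast
  with k kc(2) show ?thesis by blast
qed

lemma necessity_separation:
  assumes "local_metric_dim PV PE = (\<Sum>i\<in>V. local_adj_dim (HV i) (HE i))"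
    and "E y1 y2" and "class_G (HV y1) (HE y1)" and "class_G (HV y2) (HE y2)"
  shows "\<exists>k\<in>V. k \<noteq> y1 \<and> k \<noteq> y2 \<and> \<not> edgeless (HV k) (HE k) \<and> gdist V E k y1 \<noteq> gdist V E k y2"
  using assms local_metric_dim_eq_sum_iff tight_class_G_edge_separated by blast

lemma necessity:
  assumes "local_metric_dim PV PE = (\<Sum>i\<in>V. local_adj_dim (HV i) (HE i))"
  shows "separation_condition \<and> twin_condition"
proof (intro conjI ballI impI)
  fix ui uj assume "ui \<in> {u\<in>V. class_G (HV u) (HE u)}" "uj \<in> {u\<in>V. class_G (HV u) (HE u)}"
    and "E ui uj \<and> \<not> true_twins V E ui uj"
  then show "\<exists>u\<in>V - ({u\<in>V - twin_set V E. edgeless (HV u) (HE u)} \<union> {ui, uj}).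
      gdist V E u ui \<noteq> gdist V E u uj"
    using necessity_separation[OF assms, of ui uj] by blast
next
  fix y1 y2 assume "y1 \<in> V" "y2 \<in> V" and tt: "true_twins V E y1 y2"
    and "class_G (HV y1) (HE y1)" "class_G (HV y2) (HE y2)"
  show "y1 = y2"
  proof (rule ccontr)
    assume "y1 \<noteq> y2"
    then have "E y1 y2" using true_twins_adjacent tt \<open>y2 \<in> V\<close> by metis
    then show False
      using necessity_separation[OF assms] gdist_to_true_twins_eq[OF graph_G tt]
        \<open>class_G (HV y1) (HE y1)\<close> \<open>class_G (HV y2) (HE y2)\<close> by blast
  qed
qed

lemma Sigma_bases_separate_copy_edge:
  assumes "local_adj_basis (HV i) (HE i) (B i)"
    and "i \<in> V" and "a \<in> HV i" and "b \<in> HV i" and "HE i a b"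
  shows "\<exists>s\<in>Sigma V B. dP s (i, a) \<noteq> dP s (i, b)"
proof -
  obtain c where c: "c \<in> B i" "gdist2 (HV i) (HE i) c a \<noteq> gdist2 (HV i) (HE i) c b"
    using assms unfolding local_adj_basis_def local_resolving_def by blast
  moreover have "c \<in> HV i"
    using assms(1) c(1) by (auto simp: local_adj_basis_def local_resolving_def)
  ultimately show ?thesis
    using dP_distinguishes_copy_edge[OF assms(2-4) assms(2)] assms(2) by blast
qed

lemma Sigma_bases_separate_at_non_class_G:
  assumes "B i \<subseteq> HV i" and "\<forall>v\<in>HV i. \<not> B i \<subseteq> open_nbhd (HV i) (HE i) v"
    and "E i j" and "a \<in> HV i" and "b \<in> HV j"
  shows "\<exists>s\<in>Sigma V B. dP s (i, a) \<noteq> dP s (j, b)"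
proof -
  have "i \<in> V" using assms(3) E_in_V by blast
  obtain c where c: "c \<in> B i" "c \<notin> open_nbhd (HV i) (HE i) a" using assms(2,4) by blast
  then have "c \<in> HV i" "\<not> HE i c a"
    using assms(1) factor_sym[OF \<open>i \<in> V\<close>] by (auto simp: open_nbhd_def)
  then show ?thesis
    using dP_distinguishes_cross_edge[OF assms(3-5) \<open>i \<in> V\<close>] c(1) \<open>i \<in> V\<close> by blast
qed

lemma Sigma_bases_separate_via_third_copy:
  assumes "local_adj_basis (HV k) (HE k) (B k)"
    and "E i j" and "a \<in> HV i" and "b \<in> HV j"
    and "k \<in> V" and "k \<noteq> i" and "k \<noteq> j" and "\<not> edgeless (HV k) (HE k)"
    and "gdist V E k i \<noteq> gdist V E k j"
  shows "\<exists>s\<in>Sigma V B. dP s (i, a) \<noteq> dP s (j, b)"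
proof -
  obtain c where "c \<in> B k" using local_adj_basis_nonempty assms(1,8) by blast
  moreover from this have "c \<in> HV k"
    using assms(1) by (auto simp: local_adj_basis_def local_resolving_def)
  ultimately show ?thesis
    using dP_distinguishes_cross_edge[OF assms(2-5)] assms(5-9) by blast
qed

text \<open>An edgeless factor in a non-trivial twin class can be traded for a twin whose factor is not
  in \<open>\<G>\<close>, hence not edgeless, which sees \<open>i\<close> and \<open>j\<close> at the same distances.\<close>

lemma separator_not_edgeless:
  assumes uniq: twin_condition and "class_G (HV i) (HE i)" and "class_G (HV j) (HE j)"
    and "u \<in> V - ({u\<in>V - twin_set V E. edgeless (HV u) (HE u)} \<union> {i, j})"
    and "gdist V E u i \<noteq> gdist V E u j"
  shows "\<exists>k\<in>V. k \<noteq> i \<and> k \<noteq> j \<and> \<not> edgeless (HV k) (HE k) \<and> gdist V E k i \<noteq> gdist V E k j"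
proof (cases "edgeless (HV u) (HE u)")
  case False
  then show ?thesis using assms(4,5) by blast
next
  case True
  then have u: "u \<in> V" "u \<in> twin_set V E" "u \<noteq> i" "u \<noteq> j" using assms(4) by auto
  obtain u' where u': "u' \<in> V" "u' \<noteq> u" "true_twins V E u u'"
    using twin_set_obtain_twin[OF u(2)] .
  have "class_G (HV u) (HE u)" using edgeless_imp_class_G factor_graph u(1) True by blast
  then have "\<not> class_G (HV u') (HE u')" using uniq u u' by blast
  then have "u' \<noteq> i" "u' \<noteq> j" "\<not> edgeless (HV u') (HE u')"
    using assms(2,3) edgeless_imp_class_G factor_graph u'(1) by blast+
  moreover have "gdist V E u' i \<noteq> gdist V E u' j"
    using assms(5) true_twins_gdist_eq[OF graph_G u'(3)] u(3,4) \<open>u' \<noteq> i\<close> \<open>u' \<noteq> j\<close>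
    by metis
  ultimately show ?thesis using u'(1) by blast
qed

lemma local_resolving_Sigma_bases:
  assumes B: "\<forall>i\<in>V. local_adj_basis (HV i) (HE i) (B i) \<and>
      (\<not> class_G (HV i) (HE i) \<longrightarrow> (\<forall>v\<in>HV i. \<not> B i \<subseteq> open_nbhd (HV i) (HE i) v))"
    and separation: separation_condition and uniq: twin_condition
  shows "local_resolving PV PE dP (Sigma V B)"
  unfolding local_resolving_def
proof (intro conjI ballI impI)
  have B_sub: "B i \<subseteq> HV i" if "i \<in> V" for i
    using B that by (auto simp: local_adj_basis_def local_resolving_def)
  then show "Sigma V B \<subseteq> PV" by (auto simp: lex_V_def)
  fix x y assume "PE x y"
  then obtain i a j b where xy: "x = (i, a)" "y = (j, b)" "i \<in> V" "a \<in> HV i" "j \<in> V" "b \<in> HV j"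
      and "E i j \<or> (i = j \<and> HE i a b)"
    by (cases x, cases y) (auto simp: PE_iff)
  then consider "i = j" "HE i a b" | "E i j" "\<not> class_G (HV i) (HE i)"
    | "E i j" "\<not> class_G (HV j) (HE j)"
    | "E i j" "class_G (HV i) (HE i)" "class_G (HV j) (HE j)" by blast
  then show "\<exists>s\<in>Sigma V B. dP s x \<noteq> dP s y"
  proof cases
    case 1
    then show ?thesis using Sigma_bases_separate_copy_edge B xy by simp
  next
    case 2
    then show ?thesis using Sigma_bases_separate_at_non_class_G B B_sub xy by simp
  next
    case 3
    have "\<exists>s\<in>Sigma V B. dP s (j, b) \<noteq> dP s (i, a)"
      by (rule Sigma_bases_separate_at_non_class_G) (use B B_sub E_sym xy 3 in auto)
    then show ?thesis using xy by (metis (no_types))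
  next
    case 4
    have "i \<noteq> j" using 4 E_irrefl by blast
    then have "\<not> true_twins V E i j" using uniq[rule_format, of i j] xy 4 by blast
    then obtain u where "u \<in> V - ({u\<in>V - twin_set V E. edgeless (HV u) (HE u)} \<union> {i, j})"
        "gdist V E u i \<noteq> gdist V E u j"
      using separation[rule_format, of i j] 4 xy by blast
    then obtain k where "k \<in> V" "k \<noteq> i" "k \<noteq> j" "\<not> edgeless (HV k) (HE k)"
        "gdist V E k i \<noteq> gdist V E k j"
      using separator_not_edgeless[OF uniq 4(2,3)] by blast
    moreover have "local_adj_basis (HV k) (HE k) (B k)" using B \<open>k \<in> V\<close> by blast
    ultimately show ?thesis using Sigma_bases_separate_via_third_copy 4(1) xy by simp
  qed
qed

lemma sufficiency:
  assumes separation: separation_condition and uniq: twin_condition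
  shows "local_metric_dim PV PE = (\<Sum>i\<in>V. local_adj_dim (HV i) (HE i))"
proof -
  have "\<forall>i\<in>V. \<exists>Bi. local_adj_basis (HV i) (HE i) Bi \<and>
      (\<not> class_G (HV i) (HE i) \<longrightarrow> (\<forall>v\<in>HV i. \<not> Bi \<subseteq> open_nbhd (HV i) (HE i) v))"
    using local_adj_basis_exists_not_in_nbhd factor_graph by blast
  from bchoice[OF this] obtain B where B: "\<forall>i\<in>V. local_adj_basis (HV i) (HE i) (B i) \<and>
      (\<not> class_G (HV i) (HE i) \<longrightarrow> (\<forall>v\<in>HV i. \<not> B i \<subseteq> open_nbhd (HV i) (HE i) v))" ..
  have "finite (B i)" if "i \<in> V" for i
    using B that factor_finite finite_subset
    unfolding local_adj_basis_def local_resolving_def by blast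
  then have "card (Sigma V B) = (\<Sum>i\<in>V. card (B i))"
    using card_SigmaI[OF finite_V] by blast
  also have "\<dots> = (\<Sum>i\<in>V. local_adj_dim (HV i) (HE i))"
    using B by (intro sum.cong) (auto simp: local_adj_basis_def)
  finally have "card (Sigma V B) = (\<Sum>i\<in>V. local_adj_dim (HV i) (HE i))" .
  then show ?thesis
    using local_metric_dim_eq_sum_iff local_resolving_Sigma_bases[OF B separation uniq] by blast
qed

end

theorem corollary3:
  fixes V :: "'a set" and E :: "'a \<Rightarrow> 'a \<Rightarrow> bool"
    and HV :: "'a \<Rightarrow> 'b set" and HE :: "'a \<Rightarrow> 'b \<Rightarrow> 'b \<Rightarrow> bool"
  assumes "connected_graph V E" and "card V \<ge> 2"
    and "\<forall>u\<in>V. graph (HV u) (HE u)"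
  shows "local_metric_dim (lex_V V HV) (lex_E V E HV HE) = (\<Sum>u\<in>V. local_adj_dim (HV u) (HE u))
    \<longleftrightarrow>
    ((\<forall>ui\<in>{u\<in>V. class_G (HV u) (HE u)}. \<forall>uj\<in>{u\<in>V. class_G (HV u) (HE u)}.
        E ui uj \<and> \<not> true_twins V E ui uj \<longrightarrow>
        (\<exists>u\<in>V - ({u\<in>V - twin_set V E. edgeless (HV u) (HE u)} \<union> {ui, uj}).
           gdist V E u ui \<noteq> gdist V E u uj))
     \<and> (\<forall>x\<in>V. card {y\<in>twin_class V E x. class_G (HV y) (HE y)} \<le> 1))"
proof -
  interpret lex_product V E HV HE using assms by unfold_locales
  have twins: "(\<forall>x\<in>V. card {y\<in>twin_class V E x. class_G (HV y) (HE y)} \<le> 1) \<longleftrightarrow>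
      (\<forall>y1\<in>V. \<forall>y2\<in>V. true_twins V E y1 y2 \<longrightarrow>
        class_G (HV y1) (HE y1) \<longrightarrow> class_G (HV y2) (HE y2) \<longrightarrow> y1 = y2)"
    by (rule card_twin_classes_le_1_iff[OF finite_V])
  show ?thesis unfolding twins using necessity sufficiency by blast
qed

end
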